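(* Let $\mathbb{V}$ be a finite-dimensional real inner product space with inner product $\langle\cdot,\cdot\rangle$, let $\mathcal{C}\subseteq\mathbb{V}$ be a convex set, let $\mathcal{F}:\mathcal{C}\to\mathbb{V}$ be a map, and let $f:\mathcal{C}\to\mathbb{R}$ be defined by $f(x)=\langle x,\mathcal{F}(x)\rangle$. Suppose that $$\langle x,\mathcal{F}(x)-\mathcal{F}(y)\rangle\ge 0\qquad\text{for all }x,y\in\mathcal{C}.$$ Then $f$ is convex and $\mathcal{F}(x)\in\partial f(x)$ for all $x\in\mathcal{C}$.
   Context: For $x\in\mathcal{C}$, the subdifferential of $f$ at $x$ (relative to $\mathcal{C}$) is $\partial f(x)=\{g\in\mathbb{V}: f(y)\ge f(x)+\langle g,y-x\rangle \text{ for all } y\in\mathcal{C}\}$. *)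

theory Defs
  imports "HOL-Analysis.Analysis"
begin

definition subdifferential :: "'a::real_inner set \<Rightarrow> ('a \<Rightarrow> real) \<Rightarrow> 'a \<Rightarrow> 'a set" where
  "subdifferential C f x = {g. \<forall>y\<in>C. f y \<ge> f x + inner g (y - x)}"

end

(* Monotonicity gives <y, F x> \<le> <y, F y> = f y, so each linear function y \<mapsto> <y, F x>
   is a minorant of f on C that touches f at x.  Hence F x is a subgradient of f at x,
   and a function with a subgradient at every point of a convex set is convex. *)
theory Submission
  imports Defs
begin

lemma linear_minorant_in_subdifferential:
  assumes "f x = inner x g"
    and "\<And>y. y \<in> C \<Longrightarrow> inner y g \<le> f y"
  shows "g \<in> subdifferential C f x"
  unfolding subdifferential_def
proof (intro CollectI ballI)
  fix y assume "y \<in> C"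
  have "f x + inner g (y - x) = inner y g"
    using assms(1) by (simp add: inner_diff_right inner_commute)
  then show "f x + inner g (y - x) \<le> f y"
    using assms(2)[OF \<open>y \<in> C\<close>] by simp
qed

lemma convex_on_if_subdifferential_nonempty:
  assumes "convex C"
    and "\<And>x. x \<in> C \<Longrightarrow> subdifferential C f x \<noteq> {}"
  shows "convex_on C f"
proof (rule convex_onI[OF _ assms(1)])
  fix t :: real and x y assume t: "0 < t" "t < 1" and xy: "x \<in> C" "y \<in> C"
  define z where "z = (1 - t) *\<^sub>R x + t *\<^sub>R y"
  have "z \<in> C"
    using assms(1) xy t unfolding z_def by (simp add: convex_def)
  then obtain g where "g \<in> subdifferential C f z"
    using assms(2) by blast
  then have x_ge: "f z + inner g (x - z) \<le> f x" and y_ge: "f z + inner g (y - z) \<le> f y"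
    using xy unfolding subdifferential_def by auto
  have "(1 - t) * inner g (x - z) + t * inner g (y - z) = 0"
    unfolding z_def by (simp add: inner_diff_right inner_add_right algebra_simps)
  then have "f z = (1 - t) * (f z + inner g (x - z)) + t * (f z + inner g (y - z))"
    by (simp add: algebra_simps)
  also have "\<dots> \<le> (1 - t) * f x + t * f y"
    using x_ge y_ge t by (intro add_mono mult_left_mono) auto
  finally show "f ((1 - t) *\<^sub>R x + t *\<^sub>R y) \<le> (1 - t) * f x + t * f y"
    unfolding z_def .
qed

theorem mainTheorem1:
  fixes C :: "'a::euclidean_space set" and F :: "'a \<Rightarrow> 'a" and f :: "'a \<Rightarrow> real"
  assumes "convex C"
    and "\<And>x. x \<in> C \<Longrightarrow> f x = inner x (F x)"
    and "\<And>x y. x \<in> C \<Longrightarrow> y \<in> C \<Longrightarrow> inner x (F x - F y) \<ge> 0"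
  shows "convex_on C f \<and> (\<forall>x\<in>C. F x \<in> subdifferential C f x)"
proof -
  have minorant: "inner y (F x) \<le> f y" if "x \<in> C" "y \<in> C" for x y
    using assms(3)[OF that(2,1)] assms(2)[OF that(2)] by (simp add: inner_diff_right)
  have subgradient: "\<forall>x\<in>C. F x \<in> subdifferential C f x"
    using assms(2) minorant by (blast intro: linear_minorant_in_subdifferential)
  then have "convex_on C f"
    using assms(1) by (blast intro: convex_on_if_subdifferential_nonempty)
  with subgradient show ?thesis by blast
qed

end
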